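(* Let $I$ be a ProbeTop-$k$ instance and let $(x,y)$ be a basic feasible solution of $\mathrm{LP}_{\mathtt{ptk}}(I)$. Then at most two components of $y=(y_i)_{i\in[n]}$ lie strictly between $0$ and $1$, and if exactly two components $y_{i_1},y_{i_2}$ are non-integral, then $y_{i_1}+y_{i_2}=1$.
   Context: $\mathrm{LP}_{\mathtt{ptk}}(I)$ for integers $1\le k\le T\le n$, values $r_1,\dots,r_J\ge 0$ and probabilities $q_{ij}\in[0,1]$ ($i\in[n],j\in[J]$, $\sum_j q_{ij}=1$) is the linear program in variables $x_{ij},y_i$: maximize $\sum_{i,j} r_j x_{ij}$ subject to $x_{ij}\le y_i q_{ij}$ for all $i,j$; $\sum_i y_i\le T$; $\sum_{i,j}x_{ij}\le k$; $x_{ij}\ge 0$; $0\le y_i\le 1$. *)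

theory Defs
  imports Main "HOL.Real"
begin

definition ptk_instance ::
  "nat \<Rightarrow> nat \<Rightarrow> nat \<Rightarrow> nat \<Rightarrow> (nat \<Rightarrow> real) \<Rightarrow> (nat \<Rightarrow> nat \<Rightarrow> real) \<Rightarrow> bool" where
  "ptk_instance n J T k r q \<longleftrightarrow>
     1 \<le> k \<and> k \<le> T \<and> T \<le> n \<and>
     (\<forall>j\<in>{1..J}. 0 \<le> r j) \<and>
     (\<forall>i\<in>{1..n}. \<forall>j\<in>{1..J}. 0 \<le> q i j \<and> q i j \<le> 1) \<and>
     (\<forall>i\<in>{1..n}. (\<Sum>j=1..J. q i j) = 1)"

text \<open>Feasible points of LP_ptk(I). A point is a pair of functions (x, y); entries
 outside the index ranges are fixed to 0, so that the point is exactly a vector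
 in R^(nJ + n).\<close>
definition ptk_feasible ::
  "nat \<Rightarrow> nat \<Rightarrow> nat \<Rightarrow> nat \<Rightarrow> (nat \<Rightarrow> nat \<Rightarrow> real)
     \<Rightarrow> (nat \<Rightarrow> nat \<Rightarrow> real) \<Rightarrow> (nat \<Rightarrow> real) \<Rightarrow> bool" where
  "ptk_feasible n J T k q x y \<longleftrightarrow>
     (\<forall>i j. (i \<notin> {1..n} \<or> j \<notin> {1..J}) \<longrightarrow> x i j = 0) \<and>
     (\<forall>i. i \<notin> {1..n} \<longrightarrow> y i = 0) \<and>
     (\<forall>i\<in>{1..n}. \<forall>j\<in>{1..J}. 0 \<le> x i j \<and> x i j \<le> y i * q i j) \<and>
     (\<forall>i\<in>{1..n}. 0 \<le> y i \<and> y i \<le> 1) \<and>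
     (\<Sum>i=1..n. y i) \<le> real T \<and>
     (\<Sum>i=1..n. \<Sum>j=1..J. x i j) \<le> real k"

text \<open>Basic feasible solution = vertex (extreme point) of the feasible polytope:
 feasible and not a proper convex combination of two distinct feasible points.\<close>
definition ptk_bfs ::
  "nat \<Rightarrow> nat \<Rightarrow> nat \<Rightarrow> nat \<Rightarrow> (nat \<Rightarrow> nat \<Rightarrow> real)
     \<Rightarrow> (nat \<Rightarrow> nat \<Rightarrow> real) \<Rightarrow> (nat \<Rightarrow> real) \<Rightarrow> bool" where
  "ptk_bfs n J T k q x y \<longleftrightarrow>
     ptk_feasible n J T k q x y \<and>
     \<not> (\<exists>x1 y1 x2 y2 (t::real).
          ptk_feasible n J T k q x1 y1 \<and> ptk_feasible n J T k q x2 y2 \<and>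
          (x1, y1) \<noteq> (x2, y2) \<and> 0 < t \<and> t < 1 \<and>
          (\<forall>i j. x i j = t * x1 i j + (1 - t) * x2 i j) \<and>
          (\<forall>i. y i = t * y1 i + (1 - t) * y2 i))"

end

theory Submission
  imports Defs Complex_Main
begin

text \<open>Write \<open>s\<^sub>i = (\<Sum>\<^sub>j x\<^sub>i\<^sub>j) / y\<^sub>i\<close> for every fractional index \<open>i\<close>. Moving \<open>y\<^sub>i\<close> to
  \<open>y\<^sub>i + e c\<^sub>i\<close> and rescaling row \<open>i\<close> of \<open>x\<close> proportionally keeps every constraint
  \<open>x\<^sub>i\<^sub>j \<le> y\<^sub>i q\<^sub>i\<^sub>j\<close> tight or slack as before, changes \<open>\<Sum> x\<close> by \<open>e \<Sum> c\<^sub>i s\<^sub>i\<close> and \<open>\<Sum> y\<close> by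
  \<open>e \<Sum> c\<^sub>i\<close>. A nonzero direction \<open>c\<close> on the fractional indices with \<open>\<Sum> c\<^sub>i s\<^sub>i = 0\<close> and
  (\<open>\<Sum> c\<^sub>i = 0\<close> or \<open>\<Sum> y < T\<close>) therefore exhibits the point as the midpoint of two
  feasible points, which a vertex is not. Three fractional indices always give such a
  direction (two homogeneous equations in three unknowns), and so do two when
  \<open>\<Sum> y < T\<close>. With exactly two fractional indices and \<open>\<Sum> y = T\<close>, their sum is
  \<open>T\<close> minus the number of ones, an integer strictly between 0 and 2.\<close>

definition perturb_x :: "(nat \<Rightarrow> nat \<Rightarrow> real) \<Rightarrow> (nat \<Rightarrow> real) \<Rightarrow> (nat \<Rightarrow> real) \<Rightarrow> real
    \<Rightarrow> nat \<Rightarrow> nat \<Rightarrow> real" where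
  "perturb_x x y c e = (\<lambda>i j. x i j * (1 + e * c i / y i))"

definition perturb_y :: "(nat \<Rightarrow> real) \<Rightarrow> (nat \<Rightarrow> real) \<Rightarrow> real \<Rightarrow> nat \<Rightarrow> real" where
  "perturb_y y c e = (\<lambda>i. y i + e * c i)"

lemma ptk_feasible_perturb:
  assumes feas: "ptk_feasible n J T k q x y"
    and supp: "\<forall>i. c i \<noteq> 0 \<longrightarrow> i \<in> {1..n} \<and> 0 < y i"
    and bnd: "\<forall>i. c i \<noteq> 0 \<longrightarrow> \<bar>e * c i\<bar> \<le> y i \<and> \<bar>e * c i\<bar> \<le> 1 - y i"
    and sumx: "(\<Sum>i=1..n. c i * (\<Sum>j=1..J. x i j) / y i) = 0"
    and sumy: "(\<Sum>i=1..n. y i) + e * (\<Sum>i=1..n. c i) \<le> real T"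
  shows "ptk_feasible n J T k q (perturb_x x y c e) (perturb_y y c e)"
proof -
  have x0: "\<forall>i j. (i \<notin> {1..n} \<or> j \<notin> {1..J}) \<longrightarrow> x i j = 0"
    and y0: "\<forall>i. i \<notin> {1..n} \<longrightarrow> y i = 0"
    and xb: "\<forall>i\<in>{1..n}. \<forall>j\<in>{1..J}. 0 \<le> x i j \<and> x i j \<le> y i * q i j"
    and yb: "\<forall>i\<in>{1..n}. 0 \<le> y i \<and> y i \<le> 1"
    and sx: "(\<Sum>i=1..n. \<Sum>j=1..J. x i j) \<le> real k"
    using feas unfolding ptk_feasible_def by auto
  have row: "0 \<le> x i j * (1 + e * c i / y i) \<and> x i j * (1 + e * c i / y i) \<le> (y i + e * c i) * q i j"
    if i: "i \<in> {1..n}" and j: "j \<in> {1..J}" for i j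
  proof (cases "c i = 0")
    case True
    then show ?thesis using xb i j by auto
  next
    case False
    then have yp: "0 < y i" and b: "\<bar>e * c i\<bar> \<le> y i" using supp bnd by auto
    have factor: "1 + e * c i / y i = (y i + e * c i) / y i" using yp by (simp add: field_simps)
    have nn: "0 \<le> (y i + e * c i) / y i" using yp b by (simp add: abs_le_iff)
    have "x i j * ((y i + e * c i) / y i) \<le> (y i * q i j) * ((y i + e * c i) / y i)"
      using xb i j nn by (intro mult_right_mono) auto
    also have "\<dots> = (y i + e * c i) * q i j" using yp by (simp add: field_simps)
    moreover have "0 \<le> x i j * ((y i + e * c i) / y i)"
      using xb i j nn by (intro mult_nonneg_nonneg) auto
    ultimately show ?thesis using factor by simp
  qed
  have ybnd: "0 \<le> y i + e * c i \<and> y i + e * c i \<le> 1" if "i \<in> {1..n}" for i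
    using yb bnd that by (cases "c i = 0") (auto simp: abs_le_iff)
  have "(\<Sum>i=1..n. \<Sum>j=1..J. x i j * (1 + e * c i / y i))
        = (\<Sum>i=1..n. (\<Sum>j=1..J. x i j) + e * (c i * (\<Sum>j=1..J. x i j) / y i))"
    by (intro sum.cong refl)
      (simp add: algebra_simps sum.distrib sum_distrib_left sum_distrib_right sum_divide_distrib)
  also have "\<dots> = (\<Sum>i=1..n. \<Sum>j=1..J. x i j) + e * (\<Sum>i=1..n. c i * (\<Sum>j=1..J. x i j) / y i)"
    by (simp add: sum.distrib sum_distrib_left)
  also have "\<dots> = (\<Sum>i=1..n. \<Sum>j=1..J. x i j)"
    using sumx by simp
  finally have "(\<Sum>i=1..n. \<Sum>j=1..J. x i j * (1 + e * c i / y i)) \<le> real k" using sx by simp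
  moreover have "(\<Sum>i=1..n. y i + e * c i) \<le> real T"
    using sumy by (simp add: sum.distrib sum_distrib_left)
  moreover have "\<forall>i. i \<notin> {1..n} \<longrightarrow> y i + e * c i = 0" using y0 supp by auto
  moreover have "\<forall>i j. (i \<notin> {1..n} \<or> j \<notin> {1..J}) \<longrightarrow> x i j * (1 + e * c i / y i) = 0"
    using x0 by auto
  moreover have "\<forall>i\<in>{1..n}. \<forall>j\<in>{1..J}. 0 \<le> x i j * (1 + e * c i / y i)
                    \<and> x i j * (1 + e * c i / y i) \<le> (y i + e * c i) * q i j"
    using row by blast
  moreover have "\<forall>i\<in>{1..n}. 0 \<le> y i + e * c i \<and> y i + e * c i \<le> 1" using ybnd by blast
  ultimately show ?thesis
    unfolding ptk_feasible_def perturb_x_def perturb_y_def by (intro conjI) assumption+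
qed

lemma ptk_bfs_not_midpoint:
  assumes bfs: "ptk_bfs n J T k q x y"
    and "ptk_feasible n J T k q x1 y1" "ptk_feasible n J T k q x2 y2" "(x1, y1) \<noteq> (x2, y2)"
    and "\<forall>i j. x i j = (x1 i j + x2 i j) / 2" "\<forall>i. y i = (y1 i + y2 i) / 2"
  shows False
proof -
  have "\<forall>i j. x i j = 1/2 * x1 i j + (1 - 1/2) * x2 i j"
    and "\<forall>i. y i = 1/2 * y1 i + (1 - 1/2) * y2 i"
    using assms(5,6) by (simp_all add: add_divide_distrib)
  with assms(2-4) have "\<exists>x1 y1 x2 y2 (t::real).
      ptk_feasible n J T k q x1 y1 \<and> ptk_feasible n J T k q x2 y2 \<and>
      (x1, y1) \<noteq> (x2, y2) \<and> 0 < t \<and> t < 1 \<and>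
      (\<forall>i j. x i j = t * x1 i j + (1 - t) * x2 i j) \<and> (\<forall>i. y i = t * y1 i + (1 - t) * y2 i)"
    by (intro exI[of _ x1] exI[of _ y1] exI[of _ x2] exI[of _ y2] exI[of _ "1/2"]) simp
  then show False using bfs unfolding ptk_bfs_def by blast
qed

lemma eventually_abs_mult_le_at_0:
  fixes b c :: real
  assumes "0 < b"
  shows "\<forall>\<^sub>F e in at 0. \<bar>e * c\<bar> \<le> b"
proof -
  have "((\<lambda>e. e * c) \<longlongrightarrow> 0) (at 0)"
    by (auto intro!: tendsto_eq_intros)
  then have "\<forall>\<^sub>F e in at 0. dist (e * c) 0 < b"
    using assms by (rule tendstoD)
  then show ?thesis by eventually_elim simp
qed

lemma eventually_ptk_feasible_perturb:
  assumes feas: "ptk_feasible n J T k q x y"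
    and supp: "\<forall>i. c i \<noteq> 0 \<longrightarrow> i \<in> {1..n} \<and> 0 < y i \<and> y i < 1"
    and sumx: "(\<Sum>i=1..n. c i * (\<Sum>j=1..J. x i j) / y i) = 0"
    and sumy: "(\<Sum>i=1..n. c i) = 0 \<or> (\<Sum>i=1..n. y i) < real T"
  shows "\<forall>\<^sub>F e in at 0. ptk_feasible n J T k q (perturb_x x y c e) (perturb_y y c e)"
proof -
  define slack where "slack = real T - (\<Sum>i=1..n. y i)"
  have "0 \<le> slack" using feas unfolding slack_def ptk_feasible_def by auto
  have "\<forall>\<^sub>F e in at 0. \<forall>i\<in>{1..n}. c i \<noteq> 0 \<longrightarrow> \<bar>e * c i\<bar> \<le> y i \<and> \<bar>e * c i\<bar> \<le> 1 - y i"
    using supp by (intro eventually_ball_finite ballI)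
      (auto intro!: eventually_conj eventually_abs_mult_le_at_0)
  moreover have "\<forall>\<^sub>F e in at 0. \<bar>e * (\<Sum>i=1..n. c i)\<bar> \<le> slack"
    using sumy \<open>0 \<le> slack\<close> unfolding slack_def by (auto intro: eventually_abs_mult_le_at_0)
  ultimately show ?thesis
  proof eventually_elim
    case (elim e)
    then show ?case
      using supp unfolding slack_def
      by (intro ptk_feasible_perturb[OF feas _ _ sumx]) (auto simp: abs_le_iff)
  qed
qed

lemma ptk_bfs_no_balanced_direction:
  assumes bfs: "ptk_bfs n J T k q x y"
    and supp: "\<forall>i. c i \<noteq> 0 \<longrightarrow> i \<in> {1..n} \<and> 0 < y i \<and> y i < 1"
    and nz: "c i0 \<noteq> 0"
    and sumx: "(\<Sum>i=1..n. c i * (\<Sum>j=1..J. x i j) / y i) = 0"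
    and sumy: "(\<Sum>i=1..n. c i) = 0 \<or> (\<Sum>i=1..n. y i) < real T"
  shows False
proof -
  have feas: "ptk_feasible n J T k q x y" using bfs unfolding ptk_bfs_def by auto
  obtain d where "d > 0" and feasible_step: "\<And>e. e \<noteq> 0 \<Longrightarrow> \<bar>e\<bar> < d \<Longrightarrow>
      ptk_feasible n J T k q (perturb_x x y c e) (perturb_y y c e)"
    using eventually_ptk_feasible_perturb[OF feas supp sumx sumy]
    unfolding eventually_at by (auto simp: dist_real_def)
  define e where "e = d / 2"
  have "e > 0" "\<bar>e\<bar> < d" using \<open>d > 0\<close> unfolding e_def by auto
  have "perturb_y y c e i0 \<noteq> perturb_y y c (-e) i0"
    using \<open>e > 0\<close> nz unfolding perturb_y_def by simp
  then have "(perturb_x x y c e, perturb_y y c e) \<noteq> (perturb_x x y c (-e), perturb_y y c (-e))"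
    by auto
  moreover have "\<forall>i j. x i j = (perturb_x x y c e i j + perturb_x x y c (-e) i j) / 2"
    unfolding perturb_x_def by (simp add: field_simps)
  moreover have "\<forall>i. y i = (perturb_y y c e i + perturb_y y c (-e) i) / 2"
    unfolding perturb_y_def by simp
  moreover have "ptk_feasible n J T k q (perturb_x x y c e) (perturb_y y c e)"
    and "ptk_feasible n J T k q (perturb_x x y c (-e)) (perturb_y y c (-e))"
    using \<open>e > 0\<close> \<open>\<bar>e\<bar> < d\<close> by (auto intro: feasible_step)
  ultimately show False by (rule ptk_bfs_not_midpoint[OF bfs, rotated 2])
qed

lemma ex_nonzero_kernel_1x2:
  fixes u v :: "'a :: comm_ring_1"
  shows "\<exists>ca cb. (ca, cb) \<noteq> (0, 0) \<and> ca * u + cb * v = 0"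
proof (cases "u = 0 \<and> v = 0")
  case True
  then show ?thesis by (intro exI[of _ 1] exI[of _ 0]) simp
next
  case False
  then show ?thesis by (intro exI[of _ v] exI[of _ "-u"]) (auto simp: mult.commute)
qed

text \<open>The second witness is the cross product of \<open>(u, v, w)\<close> with \<open>(1, 1, 1)\<close>.\<close>

lemma ex_nonzero_kernel_2x3:
  fixes u v w :: "'a :: comm_ring_1"
  shows "\<exists>ca cb cd. (ca, cb, cd) \<noteq> (0, 0, 0) \<and> ca * u + cb * v + cd * w = 0 \<and> ca + cb + cd = 0"
proof (cases "u = v \<and> v = w")
  case True
  then show ?thesis by (intro exI[of _ 1] exI[of _ "-1"] exI[of _ 0]) simp
next
  case False
  then show ?thesis
    by (intro exI[of _ "v - w"] exI[of _ "w - u"] exI[of _ "u - v"]) (auto simp: algebra_simps)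
qed

lemma sum_zero_one_eq_card:
  fixes y :: "'a \<Rightarrow> real"
  assumes "finite A" "\<forall>i\<in>A. y i = 0 \<or> y i = 1"
  shows "sum y A = real (card {i\<in>A. y i = 1})"
proof -
  have "sum y A = (\<Sum>i\<in>A. if y i = 1 then 1 else 0)"
    using assms(2) by (intro sum.cong) auto
  also have "\<dots> = real (card {i\<in>A. y i = 1})"
    using assms(1) by (simp add: sum.If_cases Collect_conj_eq Int_commute)
  finally show ?thesis .
qed

lemma ptk_bfs_card_fractional_le_2:
  assumes bfs: "ptk_bfs n J T k q x y"
  shows "card {i\<in>{1..n}. 0 < y i \<and> y i < 1} \<le> 2"
proof (rule ccontr)
  define F where "F = {i\<in>{1..n}. 0 < y i \<and> y i < 1}"
  define s where "s i = (\<Sum>j=1..J. x i j) / y i" for i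
  assume "\<not> card {i\<in>{1..n}. 0 < y i \<and> y i < 1} \<le> 2"
  then obtain S where "S \<subseteq> F" "card S = 3"
    using obtain_subset_with_card_n[of 3 F] unfolding F_def by auto
  then obtain a b d where abd: "a \<in> F" "b \<in> F" "d \<in> F" "a \<noteq> b" "b \<noteq> d" "a \<noteq> d"
    unfolding card_3_iff by auto
  obtain ca cb cd where nz: "(ca, cb, cd) \<noteq> (0, 0, 0)"
    and kernel: "ca * s a + cb * s b + cd * s d = 0" "ca + cb + cd = 0"
    using ex_nonzero_kernel_2x3 by blast
  define c where "c i = (if i = a then ca else if i = b then cb else if i = d then cd else 0)" for i
  have sum_c: "(\<Sum>i=1..n. c i * g i) = ca * g a + cb * g b + cd * g d" for g :: "nat \<Rightarrow> real"
  proof -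
    have "(\<Sum>i=1..n. c i * g i) = (\<Sum>i\<in>{a, b, d}. c i * g i)"
      using abd unfolding F_def c_def by (intro sum.mono_neutral_right) auto
    then show ?thesis using abd unfolding c_def by simp
  qed
  have "(\<Sum>i=1..n. c i * (\<Sum>j=1..J. x i j) / y i) = 0"
    using sum_c[of s] kernel(1) unfolding s_def by (simp add: mult.commute)
  moreover have "(\<Sum>i=1..n. c i) = 0"
    using sum_c[of "\<lambda>_. 1"] kernel(2) by simp
  moreover have "\<forall>i. c i \<noteq> 0 \<longrightarrow> i \<in> {1..n} \<and> 0 < y i \<and> y i < 1"
    using abd unfolding c_def F_def by auto
  moreover have "c a \<noteq> 0 \<or> c b \<noteq> 0 \<or> c d \<noteq> 0"
    using nz abd unfolding c_def by auto
  ultimately show False using ptk_bfs_no_balanced_direction[OF bfs] by blast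
qed

lemma ptk_bfs_two_fractional_sum_eq_1:
  assumes bfs: "ptk_bfs n J T k q x y"
    and "i1 \<noteq> i2" and F: "{i\<in>{1..n}. 0 < y i \<and> y i < 1} = {i1, i2}"
  shows "y i1 + y i2 = 1"
proof -
  have frac: "i \<in> {1..n}" "0 < y i" "y i < 1" if "i \<in> {i1, i2}" for i
    using that F by blast+
  have "ptk_feasible n J T k q x y" using bfs unfolding ptk_bfs_def by auto
  then have y01: "\<forall>i\<in>{1..n}. 0 \<le> y i \<and> y i \<le> 1" and "(\<Sum>i=1..n. y i) \<le> real T"
    unfolding ptk_feasible_def by auto
  moreover have "\<not> (\<Sum>i=1..n. y i) < real T"
  proof
    assume slack: "(\<Sum>i=1..n. y i) < real T"
    define s where "s i = (\<Sum>j=1..J. x i j) / y i" for i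
    obtain ca cb where nz: "(ca, cb) \<noteq> (0, 0)" and kernel: "ca * s i1 + cb * s i2 = 0"
      using ex_nonzero_kernel_1x2 by blast
    define c where "c i = (if i = i1 then ca else if i = i2 then cb else 0)" for i
    have "(\<Sum>i=1..n. c i * (\<Sum>j=1..J. x i j) / y i) = (\<Sum>i\<in>{i1, i2}. c i * (\<Sum>j=1..J. x i j) / y i)"
      using frac unfolding c_def by (intro sum.mono_neutral_right) auto
    also have "\<dots> = 0" using kernel \<open>i1 \<noteq> i2\<close> unfolding c_def s_def by simp
    finally have "(\<Sum>i=1..n. c i * (\<Sum>j=1..J. x i j) / y i) = 0" .
    moreover have "\<forall>i. c i \<noteq> 0 \<longrightarrow> i \<in> {1..n} \<and> 0 < y i \<and> y i < 1"
      using frac unfolding c_def by auto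
    moreover have "c i1 \<noteq> 0 \<or> c i2 \<noteq> 0"
      using nz \<open>i1 \<noteq> i2\<close> unfolding c_def by auto
    ultimately show False using ptk_bfs_no_balanced_direction[OF bfs] slack by blast
  qed
  ultimately have sum_T: "(\<Sum>i=1..n. y i) = real T" by simp
  define R where "R = {1..n} - {i1, i2}"
  have "\<forall>i\<in>R. y i = 0 \<or> y i = 1"
  proof
    fix i assume "i \<in> R"
    then have "i \<in> {1..n}" "i \<notin> {i1, i2}" unfolding R_def by auto
    then have "\<not> (0 < y i \<and> y i < 1)" "0 \<le> y i" "y i \<le> 1"
      using F y01 by (auto simp flip: F)
    then show "y i = 0 \<or> y i = 1" by linarith
  qed
  then have "sum y R = real (card {i\<in>R. y i = 1})"
    unfolding R_def by (intro sum_zero_one_eq_card) auto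
  moreover have "(\<Sum>i=1..n. y i) = sum y R + sum y {i1, i2}"
    unfolding R_def using frac by (intro sum.subset_diff) auto
  ultimately have "(\<Sum>i=1..n. y i) = real (card {i\<in>R. y i = 1}) + (y i1 + y i2)"
    using \<open>i1 \<noteq> i2\<close> by simp
  then obtain z :: int where z: "y i1 + y i2 = of_int z"
    using sum_T by (intro that[of "int T - int (card {i\<in>R. y i = 1})"]) simp
  have "0 < y i1 + y i2" "y i1 + y i2 < 2" using frac[of i1] frac[of i2] by simp_all
  then have "0 < z" "z < 2" unfolding z by simp_all
  then show ?thesis using z by simp
qed

theorem lemma4p2:
  fixes n J T k :: nat and r :: "nat \<Rightarrow> real" and q x :: "nat \<Rightarrow> nat \<Rightarrow> real"
    and y :: "nat \<Rightarrow> real"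
  assumes "ptk_instance n J T k r q"
    and "ptk_bfs n J T k q x y"
  shows "card {i\<in>{1..n}. 0 < y i \<and> y i < 1} \<le> 2 \<and>
         (\<forall>i1 i2. i1 \<noteq> i2 \<and> {i\<in>{1..n}. 0 < y i \<and> y i < 1} = {i1, i2}
             \<longrightarrow> y i1 + y i2 = 1)"
  using ptk_bfs_card_fractional_le_2[OF assms(2)] ptk_bfs_two_fractional_sum_eq_1[OF assms(2)]
  by blast

end
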